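(* Let $A, B_1, \ldots, B_m \in \mathbb{C}^{d\times d}$ and let $D_{A,B}=\overline{A}\otimes A+\sum_{k=1}^m \overline{B}_k\otimes B_k$, $C_{A,B}=\overline{A}\otimes I+I\otimes A+\sum_{k=1}^m \overline{B}_k\otimes B_k$, $N_{A,B}=A^*A+\sum_{k=1}^m B_k^*B_k$, $M_{A,B}=A+A^*+\sum_{k=1}^m B_k^*B_k$. If $N_{A,B}=\beta I$ for a scalar $\beta$, then $\rho(D_{A,B})=\beta$. If $M_{A,B}=\beta I$ for a scalar $\beta$, then $\alpha(C_{A,B})=\beta$.
   Context: $\overline{X}$ denotes entrywise complex conjugate, $X^*$ conjugate transpose, $I$ the identity, $\otimes$ the Kronecker product. For a square matrix $X$, $\rho(X)=\max\{|\lambda|\}$ over eigenvalues $\lambda$ of $X$ (spectral radius) and $\alpha(X)=\max\{\operatorname{Re}\lambda\}$ over eigenvalues $\lambda$ of $X$ (spectral abscissa). *)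

theory Defs
  imports "Jordan_Normal_Form.Spectral_Radius" "Jordan_Normal_Form.Schur_Decomposition"
begin

definition mat_cnj :: "complex mat \<Rightarrow> complex mat" where
  "mat_cnj A = map_mat cnj A"

text \<open>Kronecker product: block (i,j) of the result is A(i,j) * B.\<close>
definition kron :: "complex mat \<Rightarrow> complex mat \<Rightarrow> complex mat" where
  "kron A B = mat (dim_row A * dim_row B) (dim_col A * dim_col B)
     (\<lambda>(i, j). A $$ (i div dim_row B, j div dim_col B) * B $$ (i mod dim_row B, j mod dim_col B))"

definition msum :: "nat \<Rightarrow> complex mat list \<Rightarrow> complex mat" where
  "msum n Ms = foldr (+) Ms (0\<^sub>m n n)"

definition spectral_abscissa :: "complex mat \<Rightarrow> real" where
  "spectral_abscissa A = Max (Re ` spectrum A)"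

end

theory Submission
  imports Defs
begin

text \<open>Read a vector of length \<open>d * d\<close> as a \<open>d \<times> d\<close> array \<open>Z\<close>. Then the transpose of
  \<open>D\<^sub>A\<^sub>,\<^sub>B\<close> acts as the Kraus map \<open>\<Phi>(Z) = \<Sum>\<^sub>K K\<^sup>* Z K\<close> over \<open>K \<in> {A, B\<^sub>1, \<dots>, B\<^sub>m}\<close>, and that
  of \<open>C\<^sub>A\<^sub>,\<^sub>B\<close> as \<open>\<Psi>(Z) = A\<^sup>* Z + Z A + \<Sum>\<^sub>k B\<^sub>k\<^sup>* Z B\<^sub>k\<close>; both have the same spectrum as the
  original matrices. If \<open>\<Phi>(Z) = \<mu> Z\<close> with \<open>Z \<noteq> 0\<close>, test against unit vectors \<open>x, y\<close>:
  \<open>\<bar>(K x)\<^sup>* Z (K y)\<bar> \<le> \<parallel>Z\<parallel> (\<parallel>K x\<parallel>\<^sup>2 + \<parallel>K y\<parallel>\<^sup>2) / 2\<close>, and summing over \<open>K\<close> gives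
  \<open>\<bar>\<mu>\<bar> \<parallel>Z\<parallel> \<le> \<parallel>Z\<parallel> (x\<^sup>* N x + y\<^sup>* N y) / 2 = \<beta> \<parallel>Z\<parallel>\<close>, where \<open>\<parallel>Z\<parallel>\<close> is the norm of the form
  \<open>(x, y) \<mapsto> x\<^sup>* Z y\<close>. For \<open>\<Psi>\<close>, the map \<open>Z + t \<Psi>(Z)\<close> is the Kraus map of
  \<open>I + t A, \<surd>t B\<^sub>1, \<dots>, \<surd>t B\<^sub>m\<close> up to the term \<open>t\<^sup>2 A\<^sup>* Z A\<close>, and these operators satisfy
  \<open>\<Sum> K\<^sup>* K = I + t M + t\<^sup>2 A\<^sup>* A\<close>; the same estimate yields \<open>\<bar>1 + t \<mu>\<bar> \<le> 1 + t \<beta> + O(t\<^sup>2)\<close>,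
  hence \<open>Re \<mu> \<le> \<beta>\<close> as \<open>t \<rightarrow> 0\<close>. In both cases \<open>Z = I\<close> is an eigenvector for \<open>\<beta>\<close>.\<close>

lemma index_pair_less: "j1 < d \<Longrightarrow> j2 < d \<Longrightarrow> j1 * d + j2 < d * (d::nat)"
proof -
  assume "j1 < d" "j2 < d"
  then have "j1 * d + j2 < Suc j1 * d" by simp
  also have "\<dots> \<le> d * d" using \<open>j1 < d\<close> by (intro mult_le_mono1) simp
  finally show ?thesis .
qed

lemma index_div_mod_less: "i < d * d \<Longrightarrow> i div d < d \<and> i mod (d::nat) < d"
  by (cases d) (auto simp: less_mult_imp_div_less)

lemma sum_lessThan_mult:
  "(\<Sum>j<(n::nat) * d. f j) = (\<Sum>j1<n. \<Sum>j2<d. (f (j1 * d + j2) :: 'a :: comm_monoid_add))"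
proof -
  have "sum f {j1 * d..<j1 * d + d} = (\<Sum>j2<d. f (j1 * d + j2))" for j1
    using sum.shift_bounds_nat_ivl[where g=f and m=0 and k="j1 * d" and n=d]
    by (simp add: atLeast0LessThan add.commute)
  then show ?thesis by (simp add: sum.nat_group[symmetric])
qed

lemma msum_Cons: "msum n (M # Ms) = M + msum n Ms"
  by (simp add: msum_def)

lemma msum_carrier: "\<forall>M\<in>set Ms. M \<in> carrier_mat n n \<Longrightarrow> msum n Ms \<in> carrier_mat n n"
  by (induction Ms) (auto simp: msum_def)

lemma kron_carrier: "X \<in> carrier_mat d d \<Longrightarrow> Y \<in> carrier_mat d d \<Longrightarrow> kron X Y \<in> carrier_mat (d * d) (d * d)"
  by (simp add: kron_def)

lemma kron_index: "X \<in> carrier_mat d d \<Longrightarrow> Y \<in> carrier_mat d d \<Longrightarrow> i < d * d \<Longrightarrow> j < d * d \<Longrightarrow>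
  kron X Y $$ (i, j) = X $$ (i div d, j div d) * Y $$ (i mod d, j mod d)"
  by (simp add: kron_def)

lemma mat_cnj_carrier: "X \<in> carrier_mat d d \<Longrightarrow> mat_cnj X \<in> carrier_mat d d"
  by (simp add: mat_cnj_def)

lemma mat_cnj_index: "X \<in> carrier_mat d d \<Longrightarrow> i < d \<Longrightarrow> j < d \<Longrightarrow> mat_cnj X $$ (i, j) = cnj (X $$ (i, j))"
  by (simp add: mat_cnj_def)

lemma mat_cnj_cnj: "mat_cnj (mat_cnj X) = X"
  by (auto simp: mat_cnj_def)

lemma mat_cnj_one: "mat_cnj (1\<^sub>m d) = 1\<^sub>m d"
  by (auto simp: mat_cnj_def intro!: eq_matI)

lemma mat_adjoint_carrier: "K \<in> carrier_mat d d \<Longrightarrow> mat_adjoint K \<in> carrier_mat d d"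
  by (auto simp: mat_adjoint_def mat_of_rows_def cols_def)

lemma adjoint_mult_self_carrier: "K \<in> carrier_mat d d \<Longrightarrow> mat_adjoint K * K \<in> carrier_mat d d"
  by (metis mat_adjoint_carrier mult_carrier_mat)

lemma mat_adjoint_index: "K \<in> carrier_mat d d \<Longrightarrow> a < d \<Longrightarrow> b < d \<Longrightarrow> mat_adjoint K $$ (a, b) = cnj (K $$ (b, a))"
  by (auto simp: mat_adjoint_def mat_of_rows_def cols_def)

lemma spectrum_transpose_mat: "(D :: complex mat) \<in> carrier_mat n n \<Longrightarrow> spectrum (transpose_mat D) = spectrum D"
  using spectrum_root_char_poly[of D n] spectrum_root_char_poly[of "transpose_mat D" n] by simp

section \<open>Sesquilinear forms on \<open>\<complex>\<^sup>d\<close>\<close>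

text \<open>Vectors of \<open>\<complex>\<^sup>d\<close> and \<open>d \<times> d\<close> arrays are modelled as functions on indices below \<open>d\<close>;
  \<open>sesq d Z x y\<close> is \<open>x\<^sup>* Z y\<close>.\<close>

definition cinner :: "nat \<Rightarrow> (nat \<Rightarrow> complex) \<Rightarrow> (nat \<Rightarrow> complex) \<Rightarrow> complex" where
  "cinner d x y = (\<Sum>a<d. cnj (x a) * y a)"

definition sqnorm :: "nat \<Rightarrow> (nat \<Rightarrow> complex) \<Rightarrow> real" where
  "sqnorm d x = (\<Sum>a<d. (cmod (x a))\<^sup>2)"

definition sesq :: "nat \<Rightarrow> (nat \<Rightarrow> nat \<Rightarrow> complex) \<Rightarrow> (nat \<Rightarrow> complex) \<Rightarrow> (nat \<Rightarrow> complex) \<Rightarrow> complex" where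
  "sesq d Z x y = (\<Sum>a<d. \<Sum>b<d. cnj (x a) * Z a b * y b)"

definition mat_apply :: "nat \<Rightarrow> complex mat \<Rightarrow> (nat \<Rightarrow> complex) \<Rightarrow> nat \<Rightarrow> complex" where
  "mat_apply d K x a = (\<Sum>b<d. K $$ (a, b) * x b)"

definition std_basis :: "nat \<Rightarrow> nat \<Rightarrow> complex" where
  "std_basis i a = (if a = i then 1 else 0)"

lemma sesq_cong:
  "(\<And>a b. a < d \<Longrightarrow> b < d \<Longrightarrow> Z a b = Z' a b) \<Longrightarrow> (\<And>a. a < d \<Longrightarrow> x a = x' a) \<Longrightarrow>
   (\<And>a. a < d \<Longrightarrow> y a = y' a) \<Longrightarrow> sesq d Z x y = sesq d Z' x' y'"
  by (simp add: sesq_def)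

lemma sesq_add: "sesq d (\<lambda>a b. Z a b + Z' a b) x y = sesq d Z x y + sesq d Z' x y"
  by (simp add: sesq_def distrib_left distrib_right sum.distrib)

lemma sesq_scale: "sesq d (\<lambda>a b. c * Z a b) x y = c * sesq d Z x y"
  by (simp add: sesq_def sum_distrib_left mult_ac)

lemma sesq_add_left: "sesq d Z (\<lambda>a. u a + w a) y = sesq d Z u y + sesq d Z w y"
  by (simp add: sesq_def distrib_left distrib_right sum.distrib)

lemma sesq_add_right: "sesq d Z x (\<lambda>a. u a + w a) = sesq d Z x u + sesq d Z x w"
  by (simp add: sesq_def distrib_left distrib_right sum.distrib)

lemma sesq_scale_left: "sesq d Z (\<lambda>a. c * u a) y = cnj c * sesq d Z u y"
  by (simp add: sesq_def sum_distrib_left mult_ac)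

lemma sesq_scale_right: "sesq d Z x (\<lambda>a. c * u a) = c * sesq d Z x u"
  by (simp add: sesq_def sum_distrib_left mult_ac)

lemma cnj_sesq: "cnj (sesq d Z x y) = sesq d (\<lambda>a b. cnj (Z b a)) y x"
  unfolding sesq_def by (subst sum.swap) (simp add: mult_ac)

lemma sesq_std_basis:
  assumes "i < d" "j < d"
  shows "sesq d Z (std_basis i) (std_basis j) = Z i j"
proof -
  have "cnj (std_basis i a) * Z a b * std_basis j b = (if b = j then if a = i then Z a b else 0 else 0)" for a b
    by (simp add: std_basis_def)
  then have "(\<Sum>b<d. cnj (std_basis i a) * Z a b * std_basis j b) = (if a = i then Z a j else 0)" for a
    using assms by simp
  then show ?thesis using assms by (simp add: sesq_def)
qed

lemma sesq_eqI:
  "(\<And>x y. sesq d Z x y = sesq d Z' x y) \<Longrightarrow> a < d \<Longrightarrow> b < d \<Longrightarrow> Z a b = Z' a b"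
  by (metis sesq_std_basis)

lemma sesq_delta: "sesq d (\<lambda>a b. if a = b then 1 else 0) x y = cinner d x y"
proof -
  have "cnj (x a) * (if a = b then 1 else 0) * y b = (if a = b then cnj (x a) * y b else 0)" for a b
    by simp
  then show ?thesis by (simp add: sesq_def cinner_def)
qed

lemma cinner_self: "cinner d x x = of_real (sqnorm d x)"
  unfolding cinner_def sqnorm_def of_real_sum
  by (intro sum.cong refl) (metis complex_norm_square mult.commute)

lemma cinner_commute: "cinner d y x = cnj (cinner d x y)"
  by (simp add: cinner_def mult.commute)

lemma sesq_zero_mat: "sesq d (\<lambda>a b. 0\<^sub>m d d $$ (a, b)) x y = 0"
proof -
  have "sesq d (\<lambda>a b. 0\<^sub>m d d $$ (a, b)) x y = sesq d (\<lambda>a b. 0) x y" by (rule sesq_cong) auto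
  then show ?thesis by (simp add: sesq_def)
qed

lemma sesq_mat_add:
  "M \<in> carrier_mat d d \<Longrightarrow> N \<in> carrier_mat d d \<Longrightarrow>
   sesq d (\<lambda>a b. (M + N) $$ (a, b)) x y = sesq d (\<lambda>a b. M $$ (a, b)) x y + sesq d (\<lambda>a b. N $$ (a, b)) x y"
  by (subst sesq_add[symmetric]) (rule sesq_cong, auto)

lemma sesq_smult_one: "sesq d (\<lambda>a b. (\<beta> \<cdot>\<^sub>m 1\<^sub>m d) $$ (a, b)) x y = \<beta> * cinner d x y"
proof -
  have "sesq d (\<lambda>a b. (\<beta> \<cdot>\<^sub>m 1\<^sub>m d) $$ (a, b)) x y = sesq d (\<lambda>a b. \<beta> * (if a = b then 1 else 0)) x y"
    by (rule sesq_cong) auto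
  then show ?thesis by (simp add: sesq_scale sesq_delta)
qed

lemma mat_apply_one: "a < d \<Longrightarrow> mat_apply d (1\<^sub>m d) x a = x a"
proof -
  assume "a < d"
  moreover have "(1\<^sub>m d $$ (a, b) * x b) = (if b = a then x a else 0)" if "b < d" for b
    using \<open>a < d\<close> that by simp
  ultimately show ?thesis by (simp add: mat_apply_def)
qed

lemma cinner_mat_apply_right:
  "cinner d x (mat_apply d K y) = sesq d (\<lambda>a b. K $$ (a, b)) x y"
  by (simp add: cinner_def mat_apply_def sesq_def sum_distrib_left mult_ac)

lemma cinner_mat_apply_left:
  assumes "K \<in> carrier_mat d d"
  shows "cinner d (mat_apply d K x) y = sesq d (\<lambda>a b. mat_adjoint K $$ (a, b)) x y"
proof -
  have "cinner d (mat_apply d K x) y = (\<Sum>b<d. \<Sum>a<d. cnj (x a) * cnj (K $$ (b, a)) * y b)"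
    unfolding cinner_def mat_apply_def by (simp add: sum_distrib_right) (simp add: mult_ac)
  also have "\<dots> = sesq d (\<lambda>a b. mat_adjoint K $$ (a, b)) x y"
    unfolding sesq_def using assms by (subst sum.swap) (simp add: mat_adjoint_index)
  finally show ?thesis .
qed

lemma sesq_mat_apply_right:
  "sesq d Z x (mat_apply d K y) = sesq d (\<lambda>a c. \<Sum>b<d. Z a b * K $$ (b, c)) x y"
proof -
  have "sesq d Z x (mat_apply d K y) = (\<Sum>a<d. \<Sum>b<d. \<Sum>c<d. cnj (x a) * (Z a b * K $$ (b, c)) * y c)"
    by (simp add: sesq_def mat_apply_def sum_distrib_left mult.assoc)
  also have "\<dots> = (\<Sum>a<d. \<Sum>c<d. \<Sum>b<d. cnj (x a) * (Z a b * K $$ (b, c)) * y c)"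
    by (rule sum.cong[OF refl]) (rule sum.swap)
  also have "\<dots> = sesq d (\<lambda>a c. \<Sum>b<d. Z a b * K $$ (b, c)) x y"
    by (simp add: sesq_def sum_distrib_left sum_distrib_right)
  finally show ?thesis .
qed

lemma sesq_mat_apply_left:
  "sesq d Z (mat_apply d K x) y = sesq d (\<lambda>b c. \<Sum>a<d. cnj (K $$ (a, b)) * Z a c) x y"
proof -
  have "sesq d Z (mat_apply d K x) y = cnj (sesq d (\<lambda>a c. \<Sum>b<d. cnj (Z b a) * K $$ (b, c)) y x)"
    by (simp add: cnj_sesq[of d Z, symmetric] sesq_mat_apply_right[symmetric])
  also have "\<dots> = sesq d (\<lambda>b c. \<Sum>a<d. cnj (K $$ (a, b)) * Z a c) x y"
    by (simp add: cnj_sesq mult.commute)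
  finally show ?thesis .
qed

lemma cinner_mat_apply:
  assumes K: "K \<in> carrier_mat d d"
  shows "cinner d (mat_apply d K x) (mat_apply d K y) = sesq d (\<lambda>a b. (mat_adjoint K * K) $$ (a, b)) x y"
proof -
  have "(mat_adjoint K * K) $$ (a, c) = (\<Sum>b<d. mat_adjoint K $$ (a, b) * K $$ (b, c))" if "a < d" "c < d" for a c
    using that K mat_adjoint_carrier[OF K] by (simp add: scalar_prod_def atLeast0LessThan)
  then have "sesq d (\<lambda>a c. \<Sum>b<d. mat_adjoint K $$ (a, b) * K $$ (b, c)) x y
      = sesq d (\<lambda>a b. (mat_adjoint K * K) $$ (a, b)) x y"
    by (intro sesq_cong) simp_all
  then show ?thesis
    by (simp only: cinner_mat_apply_left[OF K] sesq_mat_apply_right)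
qed

lemma sum_cinner_mat_apply:
  "\<forall>K\<in>set Ks. K \<in> carrier_mat d d \<Longrightarrow>
   (\<Sum>K\<leftarrow>Ks. cinner d (mat_apply d K x) (mat_apply d K y))
     = sesq d (\<lambda>a b. msum d (map (\<lambda>K. mat_adjoint K * K) Ks) $$ (a, b)) x y"
proof (induction Ks)
  case Nil
  then show ?case by (simp add: msum_def sesq_zero_mat)
next
  case (Cons K Ks)
  then have "K \<in> carrier_mat d d" "msum d (map (\<lambda>K. mat_adjoint K * K) Ks) \<in> carrier_mat d d"
    by (auto intro!: msum_carrier simp: adjoint_mult_self_carrier)
  with Cons show ?case
    by (simp add: msum_Cons sesq_mat_add adjoint_mult_self_carrier cinner_mat_apply)
qed

lemma cinner_lindblad:
  assumes A: "A \<in> carrier_mat d d" and Bs: "\<forall>B\<in>set Bs. B \<in> carrier_mat d d"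
  shows "cinner d x (mat_apply d A y) + cinner d (mat_apply d A x) y
      + (\<Sum>B\<leftarrow>Bs. cinner d (mat_apply d B x) (mat_apply d B y))
    = sesq d (\<lambda>a b. (A + mat_adjoint A + msum d (map (\<lambda>B. mat_adjoint B * B) Bs)) $$ (a, b)) x y"
proof -
  have "msum d (map (\<lambda>B. mat_adjoint B * B) Bs) \<in> carrier_mat d d"
    using Bs by (auto intro!: msum_carrier simp: adjoint_mult_self_carrier)
  then show ?thesis
    using A by (subst sum_cinner_mat_apply[OF Bs])
      (simp add: sesq_mat_add mat_adjoint_carrier cinner_mat_apply_right cinner_mat_apply_left)
qed

section \<open>Eigenvectors of a transposed matrix as \<open>d \<times> d\<close> arrays\<close>

text \<open>The action of \<open>transpose_mat D\<close> on vectors of length \<open>d * d\<close>, written for the \<open>d \<times> d\<close> array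
  holding entry \<open>i1 * d + i2\<close> at position \<open>(i1, i2)\<close>.\<close>

definition transpose_action :: "nat \<Rightarrow> complex mat \<Rightarrow> (nat \<Rightarrow> nat \<Rightarrow> complex) \<Rightarrow> nat \<Rightarrow> nat \<Rightarrow> complex" where
  "transpose_action d D Z i1 i2 = (\<Sum>j1<d. \<Sum>j2<d. D $$ (j1 * d + j2, i1 * d + i2) * Z j1 j2)"

lemma transpose_mat_mult_vec_index:
  assumes D: "D \<in> carrier_mat (d * d) (d * d)" and v: "v \<in> carrier_vec (d * d)" and i: "i < d * d"
  shows "(transpose_mat D *\<^sub>v v) $ i = transpose_action d D (\<lambda>a b. v $ (a * d + b)) (i div d) (i mod d)"
proof -
  have "(transpose_mat D *\<^sub>v v) $ i = (\<Sum>j<d * d. D $$ (j, i) * v $ j)"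
    using D v i by (auto simp: scalar_prod_def atLeast0LessThan intro!: sum.cong)
  also have "\<dots> = (\<Sum>j1<d. \<Sum>j2<d. D $$ (j1 * d + j2, i) * v $ (j1 * d + j2))"
    by (rule sum_lessThan_mult)
  also have "\<dots> = transpose_action d D (\<lambda>a b. v $ (a * d + b)) (i div d) (i mod d)"
    by (simp add: transpose_action_def)
  finally show ?thesis .
qed

lemma spectrum_imp_transpose_action_eigen:
  assumes D: "D \<in> carrier_mat (d * d) (d * d)" and \<mu>: "\<mu> \<in> spectrum D"
  obtains a b Z where "a < d" "b < d" "Z a b \<noteq> 0"
    and "\<And>x y. sesq d (transpose_action d D Z) x y = \<mu> * sesq d Z x y"
proof -
  have "\<mu> \<in> spectrum (transpose_mat D)"
    using \<mu> spectrum_transpose_mat[OF D] by simp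
  then have "eigenvalue (transpose_mat D) \<mu>" by (simp add: spectrum_def)
  then obtain v where "eigenvector (transpose_mat D) v \<mu>" by (auto simp: eigenvalue_def)
  then have v: "v \<in> carrier_vec (d * d)" "v \<noteq> 0\<^sub>v (d * d)" and eq: "transpose_mat D *\<^sub>v v = \<mu> \<cdot>\<^sub>v v"
    using D by (auto simp: eigenvector_def)
  obtain i where i: "i < d * d" "v $ i \<noteq> 0"
    using v by (metis carrier_vecD eq_vecI index_zero_vec)
  define Z where "Z a b = v $ (a * d + b)" for a b
  have "transpose_action d D Z i1 i2 = \<mu> * Z i1 i2" if "i1 < d" "i2 < d" for i1 i2
  proof -
    have "i1 * d + i2 < d * d" using that by (rule index_pair_less)
    then show ?thesis
      using transpose_mat_mult_vec_index[OF D v(1), of "i1 * d + i2"] eq v(1) that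
      by (simp add: Z_def[abs_def])
  qed
  then have "sesq d (transpose_action d D Z) x y = \<mu> * sesq d Z x y" for x y
    by (subst sesq_scale[symmetric]) (rule sesq_cong, simp_all)
  moreover have "i div d < d" "i mod d < d"
    using index_div_mod_less[OF i(1)] by auto
  moreover have "Z (i div d) (i mod d) \<noteq> 0" using i(2) by (simp add: Z_def)
  ultimately show ?thesis using that by blast
qed

lemma transpose_action_eigen_imp_spectrum:
  assumes D: "D \<in> carrier_mat (d * d) (d * d)" and ab: "a < d" "b < d" "Z a b \<noteq> 0"
    and "\<And>x y. sesq d (transpose_action d D Z) x y = \<mu> * sesq d Z x y"
  shows "\<mu> \<in> spectrum D"
proof -
  have eigen: "transpose_action d D Z i1 i2 = \<mu> * Z i1 i2" if "i1 < d" "i2 < d" for i1 i2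
    using sesq_eqI[of d "transpose_action d D Z" "\<lambda>a b. \<mu> * Z a b"] that assms(5) by (simp add: sesq_scale)
  define v where "v = vec (d * d) (\<lambda>i. Z (i div d) (i mod d))"
  have v: "v \<in> carrier_vec (d * d)" by (simp add: v_def)
  have v_entry: "v $ (i1 * d + i2) = Z i1 i2" if "i1 < d" "i2 < d" for i1 i2
    using that index_pair_less[OF that] by (simp add: v_def)
  have "v \<noteq> 0\<^sub>v (d * d)"
  proof
    assume "v = 0\<^sub>v (d * d)"
    then have "v $ (a * d + b) = 0" using index_pair_less[OF ab(1,2)] by simp
    with v_entry[OF ab(1,2)] ab(3) show False by simp
  qed
  moreover have "transpose_mat D *\<^sub>v v = \<mu> \<cdot>\<^sub>v v"
  proof (rule eq_vecI)
    fix i assume "i < dim_vec (\<mu> \<cdot>\<^sub>v v)"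
    then have i: "i < d * d" by (simp add: v_def)
    have d: "i div d < d" "i mod d < d"
      using index_div_mod_less[OF i] by auto
    have "transpose_action d D (\<lambda>a b. v $ (a * d + b)) (i div d) (i mod d) = transpose_action d D Z (i div d) (i mod d)"
      unfolding transpose_action_def by (intro sum.cong refl) (simp add: v_entry)
    then show "(transpose_mat D *\<^sub>v v) $ i = (\<mu> \<cdot>\<^sub>v v) $ i"
      using transpose_mat_mult_vec_index[OF D v i] eigen[OF d] i by (simp add: v_def)
  qed (use D in \<open>simp add: v_def\<close>)
  ultimately have "\<mu> \<in> spectrum (transpose_mat D)"
    using v D by (auto simp: spectrum_def eigenvalue_def eigenvector_def)
  then show ?thesis using spectrum_transpose_mat[OF D] by simp
qed

lemma sesq_transpose_action_kron:
  assumes X: "X \<in> carrier_mat d d" and Y: "Y \<in> carrier_mat d d"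
  shows "sesq d (transpose_action d (kron X Y) Z) x y = sesq d Z (mat_apply d (mat_cnj X) x) (mat_apply d Y y)"
proof -
  have "transpose_action d (kron X Y) Z i1 i2 = (\<Sum>j1<d. cnj (mat_cnj X $$ (j1, i1)) * (\<Sum>j2<d. Z j1 j2 * Y $$ (j2, i2)))"
    if "i1 < d" "i2 < d" for i1 i2
  proof -
    have "kron X Y $$ (j1 * d + j2, i1 * d + i2) = X $$ (j1, i1) * Y $$ (j2, i2)" if "j1 < d" "j2 < d" for j1 j2
      using X Y that \<open>i1 < d\<close> \<open>i2 < d\<close> by (simp add: kron_index index_pair_less)
    then show ?thesis
      unfolding transpose_action_def using that X
      by (auto simp: mat_cnj_index sum_distrib_left mult_ac intro!: sum.cong)
  qed
  then show ?thesis
    unfolding sesq_mat_apply_left sesq_mat_apply_right by (intro sesq_cong) simp_all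
qed

lemma transpose_action_add:
  "D1 \<in> carrier_mat (d * d) (d * d) \<Longrightarrow> D2 \<in> carrier_mat (d * d) (d * d) \<Longrightarrow> i1 < d \<Longrightarrow> i2 < d \<Longrightarrow>
   transpose_action d (D1 + D2) Z i1 i2 = transpose_action d D1 Z i1 i2 + transpose_action d D2 Z i1 i2"
  unfolding transpose_action_def sum.distrib[symmetric]
  by (intro sum.cong refl) (auto simp: index_pair_less distrib_right)

lemma sesq_transpose_action_add:
  "D1 \<in> carrier_mat (d * d) (d * d) \<Longrightarrow> D2 \<in> carrier_mat (d * d) (d * d) \<Longrightarrow>
   sesq d (transpose_action d (D1 + D2) Z) x y = sesq d (transpose_action d D1 Z) x y + sesq d (transpose_action d D2 Z) x y"
  by (subst sesq_add[symmetric]) (rule sesq_cong, simp_all add: transpose_action_add)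

lemma sesq_transpose_action_msum:
  "\<forall>M\<in>set Ms. M \<in> carrier_mat (d * d) (d * d) \<Longrightarrow>
   sesq d (transpose_action d (msum (d * d) Ms) Z) x y = (\<Sum>M\<leftarrow>Ms. sesq d (transpose_action d M Z) x y)"
proof (induction Ms)
  case Nil
  have "sesq d (transpose_action d (0\<^sub>m (d * d) (d * d)) Z) x y = sesq d (\<lambda>a b. 0) x y"
    by (rule sesq_cong) (auto simp: transpose_action_def index_pair_less)
  then show ?case by (simp add: msum_def sesq_def)
next
  case (Cons M Ms)
  then show ?case by (simp add: msum_Cons sesq_transpose_action_add msum_carrier)
qed

lemma sesq_transpose_action_kraus:
  assumes "\<forall>K\<in>set Ks. K \<in> carrier_mat d d"
  shows "sesq d (transpose_action d (msum (d * d) (map (\<lambda>K. kron (mat_cnj K) K) Ks)) Z) x y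
    = (\<Sum>K\<leftarrow>Ks. sesq d Z (mat_apply d K x) (mat_apply d K y))"
  using assms
  by (auto simp: sesq_transpose_action_msum kron_carrier mat_cnj_carrier sesq_transpose_action_kron mat_cnj_cnj
      intro!: arg_cong[where f=sum_list] map_cong)

lemma sesq_transpose_action_lindblad:
  assumes A: "A \<in> carrier_mat d d" and Bs: "\<forall>B\<in>set Bs. B \<in> carrier_mat d d"
  shows "sesq d (transpose_action d (kron (mat_cnj A) (1\<^sub>m d) + kron (1\<^sub>m d) A
      + msum (d * d) (map (\<lambda>B. kron (mat_cnj B) B) Bs)) Z) x y
    = sesq d Z (mat_apply d A x) y + sesq d Z x (mat_apply d A y)
      + (\<Sum>B\<leftarrow>Bs. sesq d Z (mat_apply d B x) (mat_apply d B y))"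
proof -
  have carriers: "kron (mat_cnj A) (1\<^sub>m d) \<in> carrier_mat (d * d) (d * d)" "kron (1\<^sub>m d) A \<in> carrier_mat (d * d) (d * d)"
    "msum (d * d) (map (\<lambda>B. kron (mat_cnj B) B) Bs) \<in> carrier_mat (d * d) (d * d)"
    using A Bs by (auto simp: kron_carrier mat_cnj_carrier intro!: msum_carrier)
  have "sesq d Z u (mat_apply d (1\<^sub>m d) y) = sesq d Z u y" "sesq d Z (mat_apply d (1\<^sub>m d) x) w = sesq d Z x w" for u w
    by (auto intro: sesq_cong simp: mat_apply_one)
  then show ?thesis
    using A carriers
    by (simp add: sesq_transpose_action_add sesq_transpose_action_kraus[OF Bs] sesq_transpose_action_kron
        mat_cnj_carrier mat_cnj_one mat_cnj_cnj)
qed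

section \<open>The norm of a sesquilinear form\<close>

lemma sqnorm_nonneg: "0 \<le> sqnorm d x"
  by (simp add: sqnorm_def sum_nonneg)

lemma sqnorm_std_basis: "i < d \<Longrightarrow> sqnorm d (std_basis i) = 1"
proof -
  have "(cmod (std_basis i a))\<^sup>2 = (if a = i then 1 else 0)" for a by (simp add: std_basis_def)
  then show "i < d \<Longrightarrow> ?thesis" by (simp add: sqnorm_def)
qed

lemma sqnorm_eq_0_imp: "sqnorm d u = 0 \<Longrightarrow> a < d \<Longrightarrow> u a = 0"
  unfolding sqnorm_def by (subst (asm) sum_nonneg_eq_0_iff) auto

lemma sqnorm_scale: "sqnorm d (\<lambda>a. c * u a) = (cmod c)\<^sup>2 * sqnorm d u"
  by (simp add: sqnorm_def norm_mult power_mult_distrib sum_distrib_left)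

lemma sqnorm_add_scaled:
  "sqnorm d (\<lambda>a. x a + of_real t * u a) = sqnorm d x + 2 * t * Re (cinner d u x) + t\<^sup>2 * sqnorm d u"
proof -
  have "(cmod (x a + of_real t * u a))\<^sup>2 = (cmod (x a))\<^sup>2 + 2 * t * Re (cnj (u a) * x a) + t\<^sup>2 * (cmod (u a))\<^sup>2" for a
    by (simp add: cmod_power2) (simp add: power2_eq_square algebra_simps)
  then show ?thesis
    by (simp add: sqnorm_def cinner_def sum.distrib sum_distrib_left distrib_left)
qed

lemma sqnorm_shift_kraus:
  assumes "sqnorm d x = 1" and "0 \<le> t"
  shows "sqnorm d (\<lambda>a. x a + of_real t * mat_apply d A x a)
      + (\<Sum>B\<leftarrow>Bs. sqnorm d (\<lambda>a. of_real (sqrt t) * mat_apply d B x a))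
    = 1 + t * (2 * Re (cinner d (mat_apply d A x) x) + (\<Sum>B\<leftarrow>Bs. sqnorm d (mat_apply d B x)))
      + t\<^sup>2 * sqnorm d (mat_apply d A x)"
  using assms by (simp add: sqnorm_add_scaled sqnorm_scale sum_list_const_mult o_def algebra_simps)

lemma norm_le_1_if_sqnorm_1: "sqnorm d x = 1 \<Longrightarrow> a < d \<Longrightarrow> cmod (x a) \<le> 1"
proof -
  assume x: "sqnorm d x = 1" and a: "a < d"
  have "(cmod (x a))\<^sup>2 \<le> sqnorm d x" unfolding sqnorm_def by (rule member_le_sum) (use a in auto)
  with x show ?thesis by (simp add: power_le_one_iff abs_le_square_iff)
qed

lemma sqnorm_mat_apply_bounded: "\<exists>c\<ge>0. \<forall>x. sqnorm d x = 1 \<longrightarrow> sqnorm d (mat_apply d K x) \<le> c"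
proof (intro exI conjI allI impI)
  fix x assume x: "sqnorm d x = 1"
  show "sqnorm d (mat_apply d K x) \<le> (\<Sum>a<d. (\<Sum>b<d. cmod (K $$ (a, b)))\<^sup>2)"
    unfolding sqnorm_def
  proof (intro sum_mono power_mono)
    fix a
    have "cmod (mat_apply d K x a) \<le> (\<Sum>b<d. cmod (K $$ (a, b) * x b))"
      unfolding mat_apply_def by (rule norm_sum)
    also have "\<dots> \<le> (\<Sum>b<d. cmod (K $$ (a, b)))"
      using norm_le_1_if_sqnorm_1[OF x] by (intro sum_mono) (simp add: norm_mult mult_left_le)
    finally show "cmod (mat_apply d K x a) \<le> (\<Sum>b<d. cmod (K $$ (a, b)))" .
  qed simp
qed (simp add: sum_nonneg)

definition sesq_norm :: "nat \<Rightarrow> (nat \<Rightarrow> nat \<Rightarrow> complex) \<Rightarrow> real" where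
  "sesq_norm d Z = (SUP (x, y) \<in> {(x, y). sqnorm d x = 1 \<and> sqnorm d y = 1}. cmod (sesq d Z x y))"

lemma cmod_sesq_le_entry_sum:
  assumes "sqnorm d x = 1" "sqnorm d y = 1"
  shows "cmod (sesq d Z x y) \<le> (\<Sum>a<d. \<Sum>b<d. cmod (Z a b))"
proof -
  have "cmod (sesq d Z x y) \<le> (\<Sum>a<d. \<Sum>b<d. cmod (cnj (x a) * Z a b * y b))"
    unfolding sesq_def by (rule order_trans[OF norm_sum sum_mono[OF norm_sum]])
  also have "\<dots> \<le> (\<Sum>a<d. \<Sum>b<d. cmod (Z a b))"
  proof (intro sum_mono)
    fix a b assume "a \<in> {..<d}" "b \<in> {..<d}"
    then have "cmod (x a) \<le> 1" "cmod (y b) \<le> 1"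
      using norm_le_1_if_sqnorm_1 assms by auto
    then have "cmod (x a) * cmod (Z a b) * cmod (y b) \<le> 1 * cmod (Z a b) * 1"
      by (intro mult_mono) auto
    then show "cmod (cnj (x a) * Z a b * y b) \<le> cmod (Z a b)" by (simp add: norm_mult)
  qed
  finally show ?thesis .
qed

lemma cmod_sesq_le_sesq_norm:
  assumes "sqnorm d x = 1" "sqnorm d y = 1"
  shows "cmod (sesq d Z x y) \<le> sesq_norm d Z"
proof -
  have "bdd_above ((\<lambda>(x, y). cmod (sesq d Z x y)) ` {(x, y). sqnorm d x = 1 \<and> sqnorm d y = 1})"
    by (rule bdd_aboveI[where M="\<Sum>a<d. \<Sum>b<d. cmod (Z a b)"]) (auto intro: cmod_sesq_le_entry_sum)
  then show ?thesis
    unfolding sesq_norm_def using assms by (intro cSUP_upper2[where x="(x, y)"]) auto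
qed

lemma sesq_norm_le:
  assumes "0 < d" and "\<And>x y. sqnorm d x = 1 \<Longrightarrow> sqnorm d y = 1 \<Longrightarrow> cmod (sesq d Z x y) \<le> r"
  shows "sesq_norm d Z \<le> r"
  unfolding sesq_norm_def using assms sqnorm_std_basis[OF \<open>0 < d\<close>]
  by (intro cSUP_least) auto

lemma sesq_norm_pos:
  assumes "a < d" "b < d" "Z a b \<noteq> 0"
  shows "0 < sesq_norm d Z"
proof -
  have "cmod (Z a b) \<le> sesq_norm d Z"
    using cmod_sesq_le_sesq_norm[OF sqnorm_std_basis sqnorm_std_basis, of a d b Z] assms
    by (simp add: sesq_std_basis)
  moreover have "0 < cmod (Z a b)" using assms(3) by simp
  ultimately show ?thesis by linarith
qed

lemma sesq_norm_nonneg: "0 < d \<Longrightarrow> 0 \<le> sesq_norm d Z"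
  using cmod_sesq_le_sesq_norm[OF sqnorm_std_basis sqnorm_std_basis, of 0 d 0 Z]
  by (meson norm_ge_zero order_trans)

lemma cmod_sesq_le_sesq_norm_sqnorm:
  assumes "0 < d"
  shows "cmod (sesq d Z u w) \<le> sesq_norm d Z * sqrt (sqnorm d u) * sqrt (sqnorm d w)"
proof (cases "sqnorm d u = 0 \<or> sqnorm d w = 0")
  case True
  then have "sesq d Z u w = sesq d Z (\<lambda>a. 0) (\<lambda>a. 0) \<or> sesq d Z u w = sesq d Z u (\<lambda>a. 0)
      \<or> sesq d Z u w = sesq d Z (\<lambda>a. 0) w"
    by (auto intro: sesq_cong dest: sqnorm_eq_0_imp)
  then show ?thesis using True by (auto simp: sesq_def)
next
  case False
  define p q where "p = sqrt (sqnorm d u)" and "q = sqrt (sqnorm d w)"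
  have pq: "0 < p" "0 < q" using False sqnorm_nonneg[of d u] sqnorm_nonneg[of d w] by (auto simp: p_def q_def)
  have units: "sqnorm d (\<lambda>a. of_real (1 / p) * u a) = 1" "sqnorm d (\<lambda>a. of_real (1 / q) * w a) = 1"
    unfolding sqnorm_scale using pq sqnorm_nonneg[of d u] sqnorm_nonneg[of d w]
    by (simp_all add: p_def q_def norm_divide power_divide)
  have "sesq d Z u w = of_real (p * q) * sesq d Z (\<lambda>a. of_real (1 / p) * u a) (\<lambda>a. of_real (1 / q) * w a)"
    unfolding sesq_scale_left sesq_scale_right using pq by simp
  then have "cmod (sesq d Z u w) = p * q * cmod (sesq d Z (\<lambda>a. of_real (1 / p) * u a) (\<lambda>a. of_real (1 / q) * w a))"
    using pq by (simp add: norm_mult)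
  also have "\<dots> \<le> p * q * sesq_norm d Z"
    using pq by (intro mult_left_mono cmod_sesq_le_sesq_norm units) simp
  finally show ?thesis by (simp add: p_def q_def mult_ac)
qed

lemma cmod_sesq_le_sesq_norm_bound:
  assumes "0 < d" and "sqnorm d u \<le> c" and "sqnorm d w \<le> c"
  shows "cmod (sesq d Z u w) \<le> sesq_norm d Z * c"
proof -
  have "cmod (sesq d Z u w) \<le> sesq_norm d Z * sqrt (sqnorm d u) * sqrt (sqnorm d w)"
    by (rule cmod_sesq_le_sesq_norm_sqnorm[OF assms(1)])
  also have "\<dots> \<le> sesq_norm d Z * sqrt c * sqrt c"
    using assms sesq_norm_nonneg[OF assms(1), of Z] order_trans[OF sqnorm_nonneg assms(2)]
    by (intro mult_mono real_sqrt_le_mono) (auto simp: sqnorm_nonneg)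
  also have "\<dots> = sesq_norm d Z * c"
    using assms(2) sqnorm_nonneg[of d u] by (simp add: mult.assoc)
  finally show ?thesis .
qed

lemma cmod_sum_sesq_le:
  assumes "0 < d"
  shows "cmod (\<Sum>(u, w)\<leftarrow>ps. sesq d Z u w) \<le> sesq_norm d Z * (\<Sum>(u, w)\<leftarrow>ps. sqnorm d u + sqnorm d w) / 2"
proof (induction ps)
  case (Cons p ps)
  obtain u w where p: "p = (u, w)" by force
  have "sesq_norm d Z * (sqrt (sqnorm d u) * sqrt (sqnorm d w)) \<le> sesq_norm d Z * ((sqnorm d u + sqnorm d w) / 2)"
    using arith_geo_mean_sqrt[OF sqnorm_nonneg sqnorm_nonneg, of d u d w] sesq_norm_nonneg[OF assms]
    by (intro mult_left_mono) (auto simp: real_sqrt_mult)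
  then have "cmod (sesq d Z u w) \<le> sesq_norm d Z * (sqnorm d u + sqnorm d w) / 2"
    using cmod_sesq_le_sesq_norm_sqnorm[OF assms, of Z u w] by (simp add: mult_ac)
  moreover have "cmod (\<Sum>(u, w)\<leftarrow>p # ps. sesq d Z u w) \<le> cmod (sesq d Z u w) + cmod (\<Sum>(u, w)\<leftarrow>ps. sesq d Z u w)"
    by (simp add: p norm_triangle_ineq)
  moreover have "sesq_norm d Z * (\<Sum>(u, w)\<leftarrow>p # ps. sqnorm d u + sqnorm d w) / 2
      = sesq_norm d Z * (sqnorm d u + sqnorm d w) / 2 + sesq_norm d Z * (\<Sum>(u, w)\<leftarrow>ps. sqnorm d u + sqnorm d w) / 2"
    by (simp add: p distrib_left add_divide_distrib)
  ultimately show ?case using Cons.IH by linarith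
qed simp

section \<open>Eigenvalue bounds\<close>

lemma le_of_scaled_sesq_le:
  assumes ab: "a < d" "b < d" "Z a b \<noteq> 0" and "0 \<le> k"
    and bound: "\<And>x y. sqnorm d x = 1 \<Longrightarrow> sqnorm d y = 1 \<Longrightarrow> k * cmod (sesq d Z x y) \<le> sesq_norm d Z * R"
  shows "k \<le> R"
proof -
  have d: "0 < d" and Z: "0 < sesq_norm d Z" using ab sesq_norm_pos[of a d b Z] by auto
  show ?thesis
  proof (cases "k = 0")
    case True
    have "0 \<le> sesq_norm d Z * R"
      using bound[OF sqnorm_std_basis sqnorm_std_basis, of a a] ab True by simp
    then show ?thesis using True Z by (simp add: zero_le_mult_iff)
  next
    case False
    with \<open>0 \<le> k\<close> have "sesq_norm d Z \<le> sesq_norm d Z * R / k"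
      using bound by (intro sesq_norm_le[OF d]) (simp add: pos_le_divide_eq mult.commute)
    then show ?thesis using False \<open>0 \<le> k\<close> Z by (simp add: le_divide_eq mult.commute)
  qed
qed

lemma kraus_eigenvalue_norm_le:
  assumes ab: "a < d" "b < d" "Z a b \<noteq> 0"
    and eigen: "\<And>x y. \<mu> * sesq d Z x y = (\<Sum>K\<leftarrow>Ks. sesq d Z (mat_apply d K x) (mat_apply d K y))"
    and unital: "\<And>x. sqnorm d x = 1 \<Longrightarrow> (\<Sum>K\<leftarrow>Ks. sqnorm d (mat_apply d K x)) = r"
  shows "cmod \<mu> \<le> r"
proof (rule le_of_scaled_sesq_le[of a d b Z, OF ab norm_ge_zero])
  fix x y assume x: "sqnorm d x = 1" and y: "sqnorm d y = 1"
  let ?ps = "map (\<lambda>K. (mat_apply d K x, mat_apply d K y)) Ks"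
  have "cmod \<mu> * cmod (sesq d Z x y) = cmod (\<Sum>(u, w)\<leftarrow>?ps. sesq d Z u w)"
    by (simp add: eigen norm_mult[symmetric] o_def)
  also have "\<dots> \<le> sesq_norm d Z * (\<Sum>(u, w)\<leftarrow>?ps. sqnorm d u + sqnorm d w) / 2"
    using ab by (intro cmod_sum_sesq_le) simp
  also have "(\<Sum>(u, w)\<leftarrow>?ps. sqnorm d u + sqnorm d w) = r + r"
    by (simp add: o_def sum_list_addf unital x y)
  finally show "cmod \<mu> * cmod (sesq d Z x y) \<le> sesq_norm d Z * r" by simp
qed

lemma lindblad_shift_estimate:
  assumes d: "0 < d" and t: "0 < t" and x: "sqnorm d x = 1" and y: "sqnorm d y = 1"
    and eigen: "\<mu> * sesq d Z x y = sesq d Z (mat_apply d A x) y + sesq d Z x (mat_apply d A y)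
      + (\<Sum>B\<leftarrow>Bs. sesq d Z (mat_apply d B x) (mat_apply d B y))"
    and dissipative: "\<And>x. sqnorm d x = 1 \<Longrightarrow>
      2 * Re (cinner d (mat_apply d A x) x) + (\<Sum>B\<leftarrow>Bs. sqnorm d (mat_apply d B x)) = r"
    and c: "\<And>x. sqnorm d x = 1 \<Longrightarrow> sqnorm d (mat_apply d A x) \<le> c"
  shows "cmod (1 + of_real t * \<mu>) * cmod (sesq d Z x y) \<le> sesq_norm d Z * (1 + t * r + 2 * t\<^sup>2 * c)"
proof -
  define shift where "shift u a = u a + of_real t * mat_apply d A u a" for u a
  define scale where "scale u a = of_real (sqrt t) * u a" for u :: "nat \<Rightarrow> complex" and a
  define ps where "ps = (shift x, shift y) # map (\<lambda>B. (scale (mat_apply d B x), scale (mat_apply d B y))) Bs"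
  have sesq_scale_scale: "sesq d Z (scale u) (scale w) = of_real t * sesq d Z u w" for u w
    unfolding scale_def sesq_scale_left sesq_scale_right using t
    by (simp flip: of_real_mult)
  have "sesq d Z (shift x) (shift y) = sesq d Z x y + of_real t * (sesq d Z (mat_apply d A x) y
      + sesq d Z x (mat_apply d A y)) + of_real t * of_real t * sesq d Z (mat_apply d A x) (mat_apply d A y)"
    unfolding shift_def sesq_add_left sesq_add_right sesq_scale_left sesq_scale_right
    by (simp add: algebra_simps)
  moreover have "(1 + of_real t * \<mu>) * sesq d Z x y = sesq d Z x y + of_real t * (\<mu> * sesq d Z x y)"
    by (simp add: algebra_simps)
  ultimately have decomp: "(1 + of_real t * \<mu>) * sesq d Z x y
      = (\<Sum>(u, w)\<leftarrow>ps. sesq d Z u w) - of_real t * of_real t * sesq d Z (mat_apply d A x) (mat_apply d A y)"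
    unfolding ps_def eigen by (simp add: o_def sesq_scale_scale sum_list_const_mult algebra_simps)
  have sqnorm_sum: "sqnorm d (shift u) + (\<Sum>B\<leftarrow>Bs. sqnorm d (scale (mat_apply d B u))) \<le> 1 + t * r + t\<^sup>2 * c"
    if u: "sqnorm d u = 1" for u
    using sqnorm_shift_kraus[OF u, of t A Bs] t dissipative[OF u] c[OF u]
    by (simp add: shift_def[abs_def] scale_def[abs_def] mult_left_mono)
  have "(\<Sum>(u, w)\<leftarrow>ps. sqnorm d u + sqnorm d w) \<le> 2 * (1 + t * r + t\<^sup>2 * c)"
    using sqnorm_sum[OF x] sqnorm_sum[OF y] by (simp add: ps_def o_def sum_list_addf)
  then have "sesq_norm d Z * (\<Sum>(u, w)\<leftarrow>ps. sqnorm d u + sqnorm d w) \<le> sesq_norm d Z * (2 * (1 + t * r + t\<^sup>2 * c))"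
    using sesq_norm_nonneg[OF d, of Z] by (rule mult_left_mono)
  then have main: "cmod (\<Sum>(u, w)\<leftarrow>ps. sesq d Z u w) \<le> sesq_norm d Z * (1 + t * r + t\<^sup>2 * c)"
    using cmod_sum_sesq_le[OF d, where ps=ps and Z=Z] by linarith
  have "cmod (sesq d Z (mat_apply d A x) (mat_apply d A y)) \<le> sesq_norm d Z * c"
    using c[OF x] c[OF y] by (rule cmod_sesq_le_sesq_norm_bound[OF d])
  then have correction: "cmod (of_real t * of_real t * sesq d Z (mat_apply d A x) (mat_apply d A y))
      \<le> t\<^sup>2 * (sesq_norm d Z * c)"
    using t by (simp add: norm_mult power2_eq_square mult_left_mono)
  have "cmod (1 + of_real t * \<mu>) * cmod (sesq d Z x y)
      \<le> cmod (\<Sum>(u, w)\<leftarrow>ps. sesq d Z u w) + cmod (of_real t * of_real t * sesq d Z (mat_apply d A x) (mat_apply d A y))"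
    unfolding norm_mult[symmetric] decomp by (rule norm_triangle_ineq4)
  with main correction show ?thesis by (simp add: algebra_simps)
qed

lemma lindblad_eigenvalue_Re_le:
  assumes ab: "a < d" "b < d" "Z a b \<noteq> 0"
    and eigen: "\<And>x y. \<mu> * sesq d Z x y = sesq d Z (mat_apply d A x) y + sesq d Z x (mat_apply d A y)
      + (\<Sum>B\<leftarrow>Bs. sesq d Z (mat_apply d B x) (mat_apply d B y))"
    and dissipative: "\<And>x. sqnorm d x = 1 \<Longrightarrow>
      2 * Re (cinner d (mat_apply d A x) x) + (\<Sum>B\<leftarrow>Bs. sqnorm d (mat_apply d B x)) = r"
  shows "Re \<mu> \<le> r"
proof -
  have d: "0 < d" using ab by simp
  obtain c where c: "0 \<le> c" "\<And>x. sqnorm d x = 1 \<Longrightarrow> sqnorm d (mat_apply d A x) \<le> c"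
    using sqnorm_mat_apply_bounded by blast
  have shifted: "Re \<mu> \<le> r + 2 * t * c" if t: "0 < t" for t
  proof -
    have "cmod (1 + of_real t * \<mu>) \<le> 1 + t * r + 2 * t\<^sup>2 * c"
      using lindblad_shift_estimate[OF d t _ _ eigen dissipative c(2)]
      by (intro le_of_scaled_sesq_le[of a d b Z, OF ab norm_ge_zero]) (simp add: mult.commute)
    moreover have "1 + t * Re \<mu> \<le> cmod (1 + of_real t * \<mu>)"
      using complex_Re_le_cmod[of "1 + of_real t * \<mu>"] by simp
    ultimately have "t * Re \<mu> \<le> t * (r + 2 * t * c)"
      by (simp add: algebra_simps power2_eq_square)
    then show ?thesis using t by simp
  qed
  show ?thesis
  proof (rule field_le_epsilon)
    fix e :: real assume e: "0 < e"
    define t where "t = e / (2 * c + 1)"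
    have t: "0 < t" using e c(1) by (simp add: t_def)
    have "2 * t * c \<le> e"
      using e c(1) by (simp add: t_def field_simps)
    then show "Re \<mu> \<le> r + e" using shifted[OF t] by linarith
  qed
qed

lemma spectral_radius_eqI:
  assumes "D \<in> carrier_mat n n" and "\<And>\<mu>. \<mu> \<in> spectrum D \<Longrightarrow> cmod \<mu> \<le> r"
    and "\<nu> \<in> spectrum D" and "cmod \<nu> = r"
  shows "spectral_radius D = r"
  unfolding spectral_radius_def
proof (rule Max_eqI)
  show "finite (norm ` spectrum D)" using card_finite_spectrum(1)[OF assms(1)] by simp
qed (use assms in auto)

lemma spectral_abscissa_eqI:
  assumes "D \<in> carrier_mat n n" and "\<And>\<mu>. \<mu> \<in> spectrum D \<Longrightarrow> Re \<mu> \<le> r"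
    and "\<nu> \<in> spectrum D" and "Re \<nu> = r"
  shows "spectral_abscissa D = r"
  unfolding spectral_abscissa_def
proof (rule Max_eqI)
  show "finite (Re ` spectrum D)" using card_finite_spectrum(1)[OF assms(1)] by simp
qed (use assms in auto)

lemma spectral_radius_kraus:
  fixes \<beta> :: complex
  assumes d: "0 < d" and Ks: "\<forall>K\<in>set Ks. K \<in> carrier_mat d d"
    and N: "msum d (map (\<lambda>K. mat_adjoint K * K) Ks) = \<beta> \<cdot>\<^sub>m 1\<^sub>m d"
  shows "spectral_radius (msum (d * d) (map (\<lambda>K. kron (mat_cnj K) K) Ks)) = \<beta>"
proof -
  define D where "D = msum (d * d) (map (\<lambda>K. kron (mat_cnj K) K) Ks)"
  have D: "D \<in> carrier_mat (d * d) (d * d)"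
    unfolding D_def using Ks by (auto intro!: msum_carrier simp: kron_carrier mat_cnj_carrier)
  have kraus: "sesq d (transpose_action d D Z) x y = (\<Sum>K\<leftarrow>Ks. sesq d Z (mat_apply d K x) (mat_apply d K y))" for Z x y
    unfolding D_def by (rule sesq_transpose_action_kraus[OF Ks])
  have cinner_sum: "(\<Sum>K\<leftarrow>Ks. cinner d (mat_apply d K x) (mat_apply d K y)) = \<beta> * cinner d x y" for x y
    by (simp add: sum_cinner_mat_apply[OF Ks] N sesq_smult_one)
  define r where "r = (\<Sum>K\<leftarrow>Ks. sqnorm d (mat_apply d K (std_basis 0)))"
  have sqnorm_sum: "complex_of_real (\<Sum>K\<leftarrow>Ks. sqnorm d (mat_apply d K x)) = \<beta>" if "sqnorm d x = 1" for x
    using cinner_sum[of x x] that by (simp add: cinner_self o_def flip: sum_list_of_real)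
  then have \<beta>: "\<beta> = of_real r" using sqnorm_std_basis[OF d] by (simp add: r_def)
  have unital_r: "(\<Sum>K\<leftarrow>Ks. sqnorm d (mat_apply d K x)) = r" if "sqnorm d x = 1" for x
    using sqnorm_sum[OF that] \<beta> by simp
  have upper: "cmod \<mu> \<le> r" if \<mu>: "\<mu> \<in> spectrum D" for \<mu>
  proof -
    obtain a b Z where ab: "a < d" "b < d" "Z a b \<noteq> 0"
      and eigen: "\<And>x y. sesq d (transpose_action d D Z) x y = \<mu> * sesq d Z x y"
      by (rule spectrum_imp_transpose_action_eigen[OF D \<mu>]) (rule that)
    show ?thesis
      using ab eigen kraus unital_r by (intro kraus_eigenvalue_norm_le[of a d b Z \<mu> Ks]) auto
  qed
  have "\<beta> \<in> spectrum D"
  proof (rule transpose_action_eigen_imp_spectrum[OF D d d])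
    show "sesq d (transpose_action d D (\<lambda>a b. if a = b then 1 else 0)) x y
        = \<beta> * sesq d (\<lambda>a b. if a = b then 1 else 0) x y" for x y
      by (simp add: kraus sesq_delta cinner_sum)
  qed simp
  moreover have "0 \<le> r" unfolding r_def by (rule sum_list_nonneg) (auto simp: sqnorm_nonneg)
  ultimately have "spectral_radius D = r"
    using upper \<beta> by (intro spectral_radius_eqI[OF D]) auto
  then show ?thesis by (simp add: D_def \<beta>)
qed

lemma spectral_abscissa_lindblad:
  fixes \<beta> :: complex
  assumes d: "0 < d" and A: "A \<in> carrier_mat d d" and Bs: "\<forall>B\<in>set Bs. B \<in> carrier_mat d d"
    and M: "A + mat_adjoint A + msum d (map (\<lambda>B. mat_adjoint B * B) Bs) = \<beta> \<cdot>\<^sub>m 1\<^sub>m d"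
  shows "spectral_abscissa (kron (mat_cnj A) (1\<^sub>m d) + kron (1\<^sub>m d) A
      + msum (d * d) (map (\<lambda>B. kron (mat_cnj B) B) Bs)) = \<beta>"
proof -
  define C where "C = kron (mat_cnj A) (1\<^sub>m d) + kron (1\<^sub>m d) A + msum (d * d) (map (\<lambda>B. kron (mat_cnj B) B) Bs)"
  have C: "C \<in> carrier_mat (d * d) (d * d)"
    unfolding C_def using A Bs by (auto intro!: add_carrier_mat msum_carrier simp: kron_carrier mat_cnj_carrier)
  note lindblad = sesq_transpose_action_lindblad[OF A Bs, folded C_def]
  have cinner_sum: "cinner d x (mat_apply d A y) + cinner d (mat_apply d A x) y
      + (\<Sum>B\<leftarrow>Bs. cinner d (mat_apply d B x) (mat_apply d B y)) = \<beta> * cinner d x y" for x y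
    by (simp add: cinner_lindblad[OF A Bs] M sesq_smult_one)
  define r where "r = 2 * Re (cinner d (mat_apply d A (std_basis 0)) (std_basis 0))
    + (\<Sum>B\<leftarrow>Bs. sqnorm d (mat_apply d B (std_basis 0)))"
  have dissipation: "complex_of_real (2 * Re (cinner d (mat_apply d A x) x) + (\<Sum>B\<leftarrow>Bs. sqnorm d (mat_apply d B x))) = \<beta>"
    if "sqnorm d x = 1" for x
    using cinner_sum[of x x] that
    by (simp add: cinner_self o_def cinner_commute[of d x] complex_add_cnj add.commute flip: sum_list_of_real)
  then have \<beta>: "\<beta> = of_real r" using sqnorm_std_basis[OF d] by (simp add: r_def)
  have dissipation_r: "2 * Re (cinner d (mat_apply d A x) x) + (\<Sum>B\<leftarrow>Bs. sqnorm d (mat_apply d B x)) = r"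
    if "sqnorm d x = 1" for x
    using dissipation[OF that] \<beta> by (metis of_real_eq_iff)
  have upper: "Re \<mu> \<le> r" if \<mu>: "\<mu> \<in> spectrum C" for \<mu>
  proof -
    obtain a b Z where ab: "a < d" "b < d" "Z a b \<noteq> 0"
      and eigen: "\<And>x y. sesq d (transpose_action d C Z) x y = \<mu> * sesq d Z x y"
      by (rule spectrum_imp_transpose_action_eigen[OF C \<mu>]) (rule that)
    show ?thesis
      using ab eigen lindblad dissipation_r by (intro lindblad_eigenvalue_Re_le[of a d b Z \<mu> A Bs]) auto
  qed
  have "\<beta> \<in> spectrum C"
  proof (rule transpose_action_eigen_imp_spectrum[OF C d d])
    show "sesq d (transpose_action d C (\<lambda>a b. if a = b then 1 else 0)) x y
        = \<beta> * sesq d (\<lambda>a b. if a = b then 1 else 0) x y" for x y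
      using cinner_sum[of x y] by (simp add: lindblad sesq_delta algebra_simps)
  qed simp
  then have "spectral_abscissa C = r"
    using upper \<beta> by (intro spectral_abscissa_eqI[OF C]) auto
  then show ?thesis by (simp add: C_def \<beta>)
qed

theorem corollary1p2:
  fixes d :: nat and A :: "complex mat" and Bs :: "complex mat list" and \<beta> :: complex
  assumes "0 < d"
    and "A \<in> carrier_mat d d"
    and "\<forall>B \<in> set Bs. B \<in> carrier_mat d d"
  shows "(mat_adjoint A * A + msum d (map (\<lambda>B. mat_adjoint B * B) Bs) = \<beta> \<cdot>\<^sub>m 1\<^sub>m d
           \<longrightarrow> spectral_radius (kron (mat_cnj A) A + msum (d * d) (map (\<lambda>B. kron (mat_cnj B) B) Bs))
               = \<beta>)
       \<and> (A + mat_adjoint A + msum d (map (\<lambda>B. mat_adjoint B * B) Bs) = \<beta> \<cdot>\<^sub>m 1\<^sub>m d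
           \<longrightarrow> spectral_abscissa (kron (mat_cnj A) (1\<^sub>m d) + kron (1\<^sub>m d) A
                  + msum (d * d) (map (\<lambda>B. kron (mat_cnj B) B) Bs))
               = \<beta>)"
  using spectral_radius_kraus[where Ks="A # Bs"] spectral_abscissa_lindblad assms
  by (simp add: msum_Cons)

end
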